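(* Let $Q$ be a quiver, let $C\subseteq\Bbbk Q$ be a monomial subcoalgebra, and let $I\subseteq C$ be a left $C^*$-submodule of $C$ that embeds (as a left $C^*$-module) in a free left $C^*$-module. Let $e\in I$ be a vertex. Then there exists a path $p\in C$ such that: (i) for every path $q\in I$ starting at $e$, $p=qp'$ for some path $p'\in C$; (ii) for every non-trivial path $r\in C$ ending at $e$, $rp\notin C$.
   Context: $\Bbbk$ is a field. The path coalgebra $\Bbbk Q$ has basis all paths of $Q$ (including trivial paths, identified with vertices), with $\Delta(p)=\sum_{xy=p}x\otimes y$ where $xy$ denotes concatenation ($x$ followed by $y$, defined when the target of $x$ is the source of $y$), and $\varepsilon(p)=1$ if $p$ is trivial, $0$ otherwise. A subcoalgebra $C\subseteq\Bbbk Q$ is monomial if it contains all vertices and arrows of $Q$ and has a linear basis consisting of paths. The dual algebra $C^*$ has product $(fg)(x)=\sum f(x_1)g(x_2)$ and $C$ is a left $C^*$-module via $f\rightharpoonup x=\sum x_1f(x_2)$. *)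

theory Defs
  imports Main
begin

text \<open>Quiver: vertex type 'v, arrow type 'a, source map s, target map t.
A path is represented as (start vertex, list of arrows); the trivial path at v is (v, []).\<close>

type_synonym ('v,'a) path = "'v \<times> 'a list"

definition is_path :: "('a \<Rightarrow> 'v) \<Rightarrow> ('a \<Rightarrow> 'v) \<Rightarrow> ('v,'a) path \<Rightarrow> bool" where
  "is_path s t p \<longleftrightarrow>
     (snd p = [] \<or> s (hd (snd p)) = fst p) \<and>
     (\<forall>i. Suc i < length (snd p) \<longrightarrow> t (snd p ! i) = s (snd p ! Suc i))"

definition src :: "('v,'a) path \<Rightarrow> 'v" where
  "src p = fst p"

definition tgt :: "('a \<Rightarrow> 'v) \<Rightarrow> ('v,'a) path \<Rightarrow> 'v" where
  "tgt t p = (if snd p = [] then fst p else t (last (snd p)))"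

text \<open>Concatenation xy: x followed by y (meaningful when tgt x = src y).\<close>
definition pconcat :: "('v,'a) path \<Rightarrow> ('v,'a) path \<Rightarrow> ('v,'a) path" where
  "pconcat x y = (fst x, snd x @ snd y)"

text \<open>Vectors of kQ are finitely supported functions on paths; the basis vector of a path.\<close>
definition bvec :: "'p \<Rightarrow> 'p \<Rightarrow> 'k::field" where
  "bvec q = (\<lambda>p. if p = q then 1 else 0)"

definition vadd :: "('p \<Rightarrow> 'k::field) \<Rightarrow> ('p \<Rightarrow> 'k) \<Rightarrow> 'p \<Rightarrow> 'k" where
  "vadd x y = (\<lambda>p. x p + y p)"

definition vsmult :: "'k::field \<Rightarrow> ('p \<Rightarrow> 'k) \<Rightarrow> 'p \<Rightarrow> 'k" where
  "vsmult c x = (\<lambda>p. c * x p)"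

definition lin_span :: "('p \<Rightarrow> 'k::field) set \<Rightarrow> ('p \<Rightarrow> 'k) set" where
  "lin_span S = {(\<lambda>p. \<Sum>v\<in>F. c v * v p) | F c. finite F \<and> F \<subseteq> S}"

definition subspace :: "('p \<Rightarrow> 'k::field) set \<Rightarrow> bool" where
  "subspace S \<longleftrightarrow> (\<lambda>_. 0) \<in> S \<and> (\<forall>x\<in>S. \<forall>y\<in>S. vadd x y \<in> S) \<and> (\<forall>c. \<forall>x\<in>S. vsmult c x \<in> S)"

definition pathcoalg :: "('a \<Rightarrow> 'v) \<Rightarrow> ('a \<Rightarrow> 'v) \<Rightarrow> (('v,'a) path \<Rightarrow> 'k::field) set" where
  "pathcoalg s t = {x. finite {p. x p \<noteq> 0} \<and> (\<forall>p. x p \<noteq> 0 \<longrightarrow> is_path s t p)}"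

text \<open>Comultiplication, with kQ \<otimes> kQ identified with finitely supported functions on pairs of paths:
  Delta(x)(a,b) = coefficient of a \<otimes> b in Delta(x) = x(ab).\<close>
definition comul :: "('a \<Rightarrow> 'v) \<Rightarrow> ('a \<Rightarrow> 'v) \<Rightarrow> (('v,'a) path \<Rightarrow> 'k::field)
    \<Rightarrow> ('v,'a) path \<times> ('v,'a) path \<Rightarrow> 'k" where
  "comul s t x = (\<lambda>(a,b). if is_path s t a \<and> is_path s t b \<and> tgt t a = src b
                          then x (pconcat a b) else 0)"

definition tensor2 :: "('p \<Rightarrow> 'k::field) set \<Rightarrow> ('p \<Rightarrow> 'k) set \<Rightarrow> ('p \<times> 'p \<Rightarrow> 'k) set" where
  "tensor2 C D = lin_span {(\<lambda>(a,b). x a * y b) | x y. x \<in> C \<and> y \<in> D}"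

definition monomial_subcoalg :: "('a \<Rightarrow> 'v) \<Rightarrow> ('a \<Rightarrow> 'v) \<Rightarrow> (('v,'a) path \<Rightarrow> 'k::field) set \<Rightarrow> bool" where
  "monomial_subcoalg s t C \<longleftrightarrow>
     C \<subseteq> pathcoalg s t \<and> subspace C \<and>
     comul s t ` C \<subseteq> tensor2 C C \<and>
     (\<forall>v. bvec (v, []) \<in> C) \<and> (\<forall>\<alpha>. bvec (s \<alpha>, [\<alpha>]) \<in> C) \<and>
     (\<exists>P. (\<forall>p\<in>P. is_path s t p) \<and> C = lin_span (bvec ` P))"

text \<open>The dual algebra C^*: linear functionals on C (represented as extended by 0 outside C).\<close>
definition cdual :: "(('v,'a) path \<Rightarrow> 'k::field) set \<Rightarrow> ((('v,'a) path \<Rightarrow> 'k) \<Rightarrow> 'k) set" where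
  "cdual C = {f. (\<forall>x\<in>C. \<forall>y\<in>C. f (vadd x y) = f x + f y) \<and>
                 (\<forall>c. \<forall>x\<in>C. f (vsmult c x) = c * f x) \<and>
                 (\<forall>x. x \<notin> C \<longrightarrow> f x = 0)}"

definition decomps :: "('a \<Rightarrow> 'v) \<Rightarrow> ('a \<Rightarrow> 'v) \<Rightarrow> (('v,'a) path \<Rightarrow> 'k::field)
    \<Rightarrow> (('v,'a) path \<times> ('v,'a) path) set" where
  "decomps s t x = {(a,b). is_path s t a \<and> is_path s t b \<and> tgt t a = src b \<and> x (pconcat a b) \<noteq> 0}"

text \<open>Product in C^*: (fg)(x) = sum f(x1) g(x2).\<close>
definition conv :: "('a \<Rightarrow> 'v) \<Rightarrow> ('a \<Rightarrow> 'v) \<Rightarrow> (('v,'a) path \<Rightarrow> 'k::field) set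
    \<Rightarrow> ((('v,'a) path \<Rightarrow> 'k) \<Rightarrow> 'k) \<Rightarrow> ((('v,'a) path \<Rightarrow> 'k) \<Rightarrow> 'k)
    \<Rightarrow> (('v,'a) path \<Rightarrow> 'k) \<Rightarrow> 'k" where
  "conv s t C f g = (\<lambda>x. if x \<in> C then
      (\<Sum>(a,b)\<in>decomps s t x. x (pconcat a b) * f (bvec a) * g (bvec b)) else 0)"

text \<open>Left action of C^* on C: f \<rightharpoonup> x = sum x1 f(x2).\<close>
definition act :: "('a \<Rightarrow> 'v) \<Rightarrow> ('a \<Rightarrow> 'v) \<Rightarrow> ((('v,'a) path \<Rightarrow> 'k::field) \<Rightarrow> 'k)
    \<Rightarrow> (('v,'a) path \<Rightarrow> 'k) \<Rightarrow> ('v,'a) path \<Rightarrow> 'k" where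
  "act s t f x = (\<lambda>a. \<Sum>(a',b)\<in>{(a',b). (a',b) \<in> decomps s t x \<and> a' = a}.
                        x (pconcat a b) * f (bvec b))"

definition left_submodule :: "('a \<Rightarrow> 'v) \<Rightarrow> ('a \<Rightarrow> 'v) \<Rightarrow> (('v,'a) path \<Rightarrow> 'k::field) set
    \<Rightarrow> (('v,'a) path \<Rightarrow> 'k) set \<Rightarrow> bool" where
  "left_submodule s t C I \<longleftrightarrow> I \<subseteq> C \<and> subspace I \<and> (\<forall>f\<in>cdual C. \<forall>x\<in>I. act s t f x \<in> I)"

text \<open>The free left C^*-module with basis indexed by J (finitely supported families in C^*).\<close>
definition free_mod :: "(('v,'a) path \<Rightarrow> 'k::field) set \<Rightarrow> 'j set
    \<Rightarrow> ('j \<Rightarrow> (('v,'a) path \<Rightarrow> 'k) \<Rightarrow> 'k) set" where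
  "free_mod C J = {u. (\<forall>j. u j \<in> cdual C) \<and> (\<forall>j. j \<notin> J \<longrightarrow> u j = (\<lambda>_. 0)) \<and>
                      finite {j. u j \<noteq> (\<lambda>_. 0)}}"

definition embeds_in_free :: "('a \<Rightarrow> 'v) \<Rightarrow> ('a \<Rightarrow> 'v) \<Rightarrow> (('v,'a) path \<Rightarrow> 'k::field) set
    \<Rightarrow> (('v,'a) path \<Rightarrow> 'k) set \<Rightarrow> 'j set \<Rightarrow> bool" where
  "embeds_in_free s t C I J \<longleftrightarrow> (\<exists>\<phi>.
      \<phi> ` I \<subseteq> free_mod C J \<and> inj_on \<phi> I \<and>
      (\<forall>x\<in>I. \<forall>y\<in>I. \<phi> (vadd x y) = (\<lambda>j z. \<phi> x j z + \<phi> y j z)) \<and>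
      (\<forall>f\<in>cdual C. \<forall>x\<in>I. \<phi> (act s t f x) = (\<lambda>j. conv s t C f (\<phi> x j))))"

end

theory Submission
  imports Defs
begin

text \<open>Let \<open>\<phi>\<close> embed \<open>I\<close> into a free \<open>C\<^sup>*\<close>-module and choose a coordinate \<open>g = \<phi>(e)\<^sub>j \<noteq> 0\<close>.
Since \<open>C\<close> is spanned by paths, \<open>g(z) \<noteq> 0\<close> for some path \<open>z \<in> C\<close>; this \<open>z\<close> is the required \<open>p\<close>.
Write \<open>\<delta>\<^sub>w\<close> (\<open>path_coord C w\<close>) for the coordinate functional of the path \<open>w\<close>. For a path \<open>q \<in> I\<close> starting at \<open>e\<close> we
have \<open>\<delta>\<^sub>q \<rightharpoonup> q = e\<close>, so \<open>g = \<delta>\<^sub>q \<phi>(q)\<^sub>j\<close>, and \<open>(\<delta>\<^sub>q h)(z) \<noteq> 0\<close> forces \<open>q\<close> to be a prefix of \<open>z\<close>.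
For a non-trivial path \<open>r\<close> ending at \<open>e\<close> we have \<open>\<delta>\<^sub>r \<rightharpoonup> e = 0\<close>, so \<open>\<delta>\<^sub>r g = 0\<close>; but if
\<open>rz \<in> C\<close> then \<open>(\<delta>\<^sub>r g)(rz) = g(z) \<noteq> 0\<close>.\<close>

definition path_coord :: "(('v,'a) path \<Rightarrow> 'k::field) set \<Rightarrow> ('v,'a) path \<Rightarrow> (('v,'a) path \<Rightarrow> 'k) \<Rightarrow> 'k" where
  "path_coord C w = (\<lambda>x. if x \<in> C then x w else 0)"

lemma path_coord_cdual: "subspace C \<Longrightarrow> path_coord C w \<in> cdual C"
  unfolding cdual_def subspace_def path_coord_def vadd_def vsmult_def by auto

lemma bvec_neq_zero_iff: "(bvec a b :: 'k::field) \<noteq> 0 \<longleftrightarrow> b = a"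
  by (simp add: bvec_def)

lemma path_coord_bvec_neq_zeroD:
  "path_coord C w (bvec a :: _ \<Rightarrow> 'k::field) \<noteq> 0 \<Longrightarrow> a = w \<and> bvec a \<in> C"
  unfolding path_coord_def by (auto simp: bvec_def split: if_splits)

lemma sum_pairs_eq_zero: "(\<And>a b. (a,b) \<in> S \<Longrightarrow> F a b = 0) \<Longrightarrow> (\<Sum>(a,b)\<in>S. F a b) = 0"
  by (rule sum.neutral) auto

lemma subset_lin_span: "S \<subseteq> lin_span S"
proof
  fix w assume "w \<in> S"
  then have "(\<lambda>p. \<Sum>v\<in>{w}. 1 * v p) \<in> lin_span S"
    unfolding lin_span_def by (intro CollectI exI[of _ "{w}"] exI[of _ "\<lambda>_. 1"]) auto
  then show "w \<in> lin_span S" by simp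
qed

lemma cdual_sum:
  assumes "g \<in> cdual C" "subspace C" "finite F" "F \<subseteq> C"
  shows "(\<lambda>p. \<Sum>v\<in>F. c v * v p) \<in> C \<and> g (\<lambda>p. \<Sum>v\<in>F. c v * v p) = (\<Sum>v\<in>F. c v * g v)"
  using assms(3,4)
proof (induction F rule: finite_induct)
  case empty
  have zero: "(\<lambda>_. 0) \<in> C" using assms(2) by (simp add: subspace_def)
  have "g (vsmult 0 (\<lambda>_. 0)) = 0 * g (\<lambda>_. 0)" using assms(1) zero by (simp add: cdual_def)
  then show ?case using zero by (simp add: vsmult_def)
next
  case (insert v F)
  let ?R = "\<lambda>p. \<Sum>v\<in>F. c v * v p"
  have R: "?R \<in> C" "g ?R = (\<Sum>v\<in>F. c v * g v)" and v: "v \<in> C" using insert by auto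
  have sv: "vsmult (c v) v \<in> C" using assms(2) v by (simp add: subspace_def)
  have eq: "(\<lambda>p. \<Sum>v\<in>insert v F. c v * v p) = vadd (vsmult (c v) v) ?R"
    using insert by (simp add: vadd_def vsmult_def)
  have "vadd (vsmult (c v) v) ?R \<in> C" using assms(2) sv R by (simp add: subspace_def)
  moreover have "g (vadd (vsmult (c v) v) ?R) = c v * g v + g ?R"
    using assms(1) sv R v by (simp add: cdual_def)
  ultimately show ?case using eq R insert by simp
qed

lemma cdual_nonzero_on_spanning_path:
  assumes "subspace C" "C = lin_span (bvec ` P)" "g \<in> cdual C" "g x \<noteq> 0"
  shows "\<exists>z\<in>P. g (bvec z) \<noteq> 0"
proof -
  have "x \<in> C" using assms(3,4) by (auto simp: cdual_def)
  then obtain F c where x: "x = (\<lambda>p. \<Sum>v\<in>F. c v * v p)" and F: "finite F" "F \<subseteq> bvec ` P"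
    using assms(2) unfolding lin_span_def by blast
  have "F \<subseteq> C" using F(2) subset_lin_span assms(2) by blast
  then have "(\<Sum>v\<in>F. c v * g v) \<noteq> 0" using cdual_sum[OF assms(3,1) F(1)] assms(4) x by simp
  then obtain v where "v \<in> F" "g v \<noteq> 0" using sum.not_neutral_contains_not_neutral by force
  then show ?thesis using F(2) by auto
qed

lemma additive_map_zero:
  fixes \<phi> :: "('p \<Rightarrow> 'k::field) \<Rightarrow> 'j \<Rightarrow> 'x \<Rightarrow> 'c::cancel_comm_monoid_add"
  assumes "subspace I" "\<forall>x\<in>I. \<forall>y\<in>I. \<phi> (vadd x y) = (\<lambda>j z. \<phi> x j z + \<phi> y j z)"
  shows "\<phi> (\<lambda>_. 0) = (\<lambda>j z. 0)"
proof -
  have zero: "(\<lambda>_. 0) \<in> I" using assms(1) by (simp add: subspace_def)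
  have zero_sum: "vadd (\<lambda>_. 0) (\<lambda>_. 0) = (\<lambda>_. 0)" by (simp add: vadd_def)
  have double: "\<phi> (\<lambda>_. 0) = (\<lambda>j z. \<phi> (\<lambda>_. 0) j z + \<phi> (\<lambda>_. 0) j z)"
    using assms(2)[rule_format, OF zero zero] unfolding zero_sum .
  have "\<phi> (\<lambda>_. 0) j z = 0" for j z
    using fun_cong[OF fun_cong[OF double, of j], of z] by simp
  then show ?thesis by (intro ext)
qed

lemma finite_decomps_bvec: "finite (decomps s t (bvec w :: _ \<Rightarrow> 'k::field))"
proof -
  let ?split = "\<lambda>k. ((fst w, take k (snd w)), (tgt t (fst w, take k (snd w)), drop k (snd w)))"
  have "decomps s t (bvec w :: _ \<Rightarrow> 'k) \<subseteq> ?split ` {..length (snd w)}"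
  proof clarify
    fix a b assume "(a, b) \<in> decomps s t (bvec w :: _ \<Rightarrow> 'k)"
    then have ab: "pconcat a b = w" "tgt t a = src b" by (auto simp: decomps_def bvec_neq_zero_iff)
    then have "(a, b) = ?split (length (snd a))" "length (snd a) \<le> length (snd w)"
      by (cases a, cases b, auto simp: pconcat_def src_def)+
    then show "(a, b) \<in> ?split ` {..length (snd w)}" by auto
  qed
  then show ?thesis by (rule finite_subset) auto
qed

lemma act_path_coord_self:
  assumes "is_path s t q" "bvec q \<in> C"
  shows "act s t (path_coord C q) (bvec q :: _ \<Rightarrow> 'k::field) = bvec (src q, [])" (is "?L = ?R")
proof (rule ext)
  fix a
  show "?L a = ?R a"
  proof (cases "a = (fst q, [])")
    case True
    have "{(a',b). (a',b) \<in> decomps s t (bvec q :: _ \<Rightarrow> 'k) \<and> a' = a} = {(a, q)}"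
      using True assms(1)
      by (auto simp: decomps_def pconcat_def bvec_def is_path_def tgt_def src_def split: if_splits)
    then show ?thesis unfolding act_def using True assms
      by (simp add: pconcat_def bvec_def path_coord_def src_def)
  next
    case False
    have "bvec q (pconcat a b) * path_coord C q (bvec b) = (0::'k)" for b
    proof (rule ccontr)
      assume "bvec q (pconcat a b) * path_coord C q (bvec b) \<noteq> (0::'k)"
      then have "pconcat a b = q" "b = q"
        using path_coord_bvec_neq_zeroD[of C q b] by (auto simp: bvec_neq_zero_iff)
      then show False using False by (cases a, cases q, auto simp: pconcat_def)
    qed
    then show ?thesis using False unfolding act_def by (simp add: sum_pairs_eq_zero bvec_def src_def)
  qed
qed

lemma act_path_coord_vertex:
  assumes "snd r \<noteq> []"
  shows "act s t (path_coord C r) (bvec (e, []) :: _ \<Rightarrow> 'k::field) = (\<lambda>_. 0)"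
proof (rule ext)
  fix a
  have "bvec (e, []) (pconcat a b) * path_coord C r (bvec b) = (0::'k)" for b
  proof (rule ccontr)
    assume "bvec (e, []) (pconcat a b) * path_coord C r (bvec b) \<noteq> (0::'k)"
    then have "pconcat a b = (e, [])" "b = r"
      using path_coord_bvec_neq_zeroD[of C r b] by (auto simp: bvec_neq_zero_iff)
    then show False using assms by (auto simp: pconcat_def)
  qed
  then show "act s t (path_coord C r) (bvec (e, [])) a = 0"
    unfolding act_def by (simp add: sum_pairs_eq_zero)
qed

lemma conv_path_coord_concat:
  assumes "bvec (pconcat r z) \<in> C" "is_path s t r" "is_path s t z" "tgt t r = src z" "bvec r \<in> C"
  shows "conv s t C (path_coord C r) g (bvec (pconcat r z) :: _ \<Rightarrow> 'k::field) = g (bvec z)"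
proof -
  let ?D = "decomps s t (bvec (pconcat r z) :: _ \<Rightarrow> 'k)"
  let ?F = "\<lambda>(a,b). (bvec (pconcat r z) (pconcat a b) :: 'k) * path_coord C r (bvec a) * g (bvec b)"
  have rz: "(r,z) \<in> ?D" using assms by (simp add: decomps_def bvec_def)
  have "sum ?F (?D - {(r,z)}) = 0"
  proof (rule sum_pairs_eq_zero)
    fix a b assume ab: "(a, b) \<in> ?D - {(r,z)}"
    show "(bvec (pconcat r z) (pconcat a b) :: 'k) * path_coord C r (bvec a) * g (bvec b) = 0"
    proof (rule ccontr)
      assume "(bvec (pconcat r z) (pconcat a b) :: 'k) * path_coord C r (bvec a) * g (bvec b) \<noteq> 0"
      then have "pconcat a b = pconcat r z" "a = r"
        using path_coord_bvec_neq_zeroD[of C r a] by (auto simp: bvec_neq_zero_iff)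
      moreover have "tgt t a = src b" using ab by (simp add: decomps_def)
      ultimately have "b = z" using assms(4) by (cases b, cases z, auto simp: pconcat_def src_def)
      then show False using ab \<open>a = r\<close> by simp
    qed
  qed
  then have "sum ?F ?D = ?F (r,z)" by (simp add: sum.remove[OF finite_decomps_bvec rz])
  then show ?thesis using assms unfolding conv_def by (simp add: bvec_def path_coord_def)
qed

lemma conv_path_coord_nonzero_imp_prefix:
  assumes "conv s t C (path_coord C q) h (bvec z :: _ \<Rightarrow> 'k::field) \<noteq> 0" "h \<in> cdual C"
  shows "\<exists>p'. is_path s t p' \<and> bvec p' \<in> C \<and> tgt t q = src p' \<and> z = pconcat q p'"
proof -
  let ?F = "\<lambda>(a,b). (bvec z (pconcat a b) :: 'k) * path_coord C q (bvec a) * h (bvec b)"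
  have "bvec z \<in> C" using assms(1) by (auto simp: conv_def split: if_splits)
  then have "sum ?F (decomps s t (bvec z :: _ \<Rightarrow> 'k)) \<noteq> 0" using assms(1) by (simp add: conv_def)
  then obtain ab where "ab \<in> decomps s t (bvec z :: _ \<Rightarrow> 'k)" "?F ab \<noteq> 0"
    using sum.not_neutral_contains_not_neutral by blast
  then obtain a b where ab: "(a,b) \<in> decomps s t (bvec z :: _ \<Rightarrow> 'k)"
      "(bvec z (pconcat a b) :: 'k) * path_coord C q (bvec a) * h (bvec b) \<noteq> 0"
    by (cases ab) auto
  then have "pconcat a b = z" "a = q" "bvec b \<in> C"
    using path_coord_bvec_neq_zeroD[of C q a] assms(2) by (auto simp: bvec_neq_zero_iff cdual_def)
  moreover have "is_path s t b" "tgt t a = src b" using ab(1) by (auto simp: decomps_def)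
  ultimately show ?thesis by blast
qed

lemma coord_nonzero_imp_prefix:
  assumes lin: "\<forall>f\<in>cdual C. \<forall>x\<in>I. \<phi> (act s t f x) = (\<lambda>j. conv s t C f (\<phi> x j))"
    and "subspace C" "I \<subseteq> C" "\<And>x. x \<in> I \<Longrightarrow> \<phi> x j \<in> cdual C"
    and q: "is_path s t q" "bvec q \<in> I"
    and nz: "\<phi> (bvec (src q, [])) j (bvec z :: _ \<Rightarrow> 'k::field) \<noteq> 0"
  shows "\<exists>p'. is_path s t p' \<and> bvec p' \<in> C \<and> tgt t q = src p' \<and> z = pconcat q p'"
proof -
  have "act s t (path_coord C q) (bvec q) = bvec (src q, [])"
    using act_path_coord_self q assms(3) by blast
  moreover have "\<phi> (act s t (path_coord C q) (bvec q)) = (\<lambda>j. conv s t C (path_coord C q) (\<phi> (bvec q) j))"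
    using lin path_coord_cdual[OF assms(2)] q(2) by blast
  ultimately have "conv s t C (path_coord C q) (\<phi> (bvec q) j) (bvec z) \<noteq> 0"
    using nz by simp
  then show ?thesis using assms(4)[OF q(2)] by (rule conv_path_coord_nonzero_imp_prefix)
qed

lemma coord_nonzero_imp_no_extension:
  assumes lin: "\<forall>f\<in>cdual C. \<forall>x\<in>I. \<phi> (act s t f x) = (\<lambda>j. conv s t C f (\<phi> x j))"
    and "subspace C" "\<phi> (\<lambda>_. 0) = (\<lambda>j z. 0)" "bvec (e, []) \<in> I"
    and r: "is_path s t r" "bvec r \<in> C" "snd r \<noteq> []" "tgt t r = e"
    and z: "is_path s t z" "src z = e"
    and nz: "\<phi> (bvec (e, [])) j (bvec z :: _ \<Rightarrow> 'k::field) \<noteq> 0"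
  shows "bvec (pconcat r z) \<notin> C"
proof
  assume rz: "bvec (pconcat r z) \<in> C"
  have "\<phi> (act s t (path_coord C r) (bvec (e, []))) = (\<lambda>j. conv s t C (path_coord C r) (\<phi> (bvec (e, [])) j))"
    using lin path_coord_cdual[OF assms(2)] assms(4) by blast
  then have "conv s t C (path_coord C r) (\<phi> (bvec (e, [])) j) = (\<lambda>_. 0)"
    using assms(3) by (simp add: act_path_coord_vertex[OF r(3)] fun_eq_iff)
  moreover have "conv s t C (path_coord C r) (\<phi> (bvec (e, [])) j) (bvec (pconcat r z))
      = \<phi> (bvec (e, [])) j (bvec z)"
    using conv_path_coord_concat[OF rz r(1) z(1) _ r(2)] r(4) z(2) by simp
  ultimately show False using nz by simp
qed

theorem lemma4p5:
  fixes s t :: "'a \<Rightarrow> 'v"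
    and C I :: "(('v,'a) path \<Rightarrow> 'k::field) set"
    and J :: "'j set"
    and e :: 'v
  assumes "monomial_subcoalg s t C"
    and "left_submodule s t C I"
    and "embeds_in_free s t C I J"
    and "bvec (e, []) \<in> I"
  shows "\<exists>p. is_path s t p \<and> bvec p \<in> C \<and>
    (\<forall>q. is_path s t q \<and> bvec q \<in> I \<and> src q = e \<longrightarrow>
        (\<exists>p'. is_path s t p' \<and> bvec p' \<in> C \<and> tgt t q = src p' \<and> p = pconcat q p')) \<and>
    (\<forall>r. is_path s t r \<and> bvec r \<in> C \<and> snd r \<noteq> [] \<and> tgt t r = e \<longrightarrow>
        bvec (pconcat r p) \<notin> C)"
proof -
  obtain P where C: "subspace C" "C = lin_span (bvec ` P)" "\<forall>p\<in>P. is_path s t p"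
    using assms(1) by (auto simp: monomial_subcoalg_def)
  have I: "I \<subseteq> C" "subspace I" using assms(2) by (auto simp: left_submodule_def)
  obtain \<phi> where free: "\<phi> ` I \<subseteq> free_mod C J" and "inj_on \<phi> I"
    and add: "\<forall>x\<in>I. \<forall>y\<in>I. \<phi> (vadd x y) = (\<lambda>j z. \<phi> x j z + \<phi> y j z)"
    and lin: "\<forall>f\<in>cdual C. \<forall>x\<in>I. \<phi> (act s t f x) = (\<lambda>j. conv s t C f (\<phi> x j))"
    using assms(3) unfolding embeds_in_free_def by blast
  have zero: "\<phi> (\<lambda>_. 0) = (\<lambda>j z. 0)" using additive_map_zero[OF I(2) add] .
  have coords: "\<And>x j. x \<in> I \<Longrightarrow> \<phi> x j \<in> cdual C" using free by (auto simp: free_mod_def)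
  have "bvec (e, []) \<noteq> (\<lambda>_. 0::'k)" by (metis bvec_neq_zero_iff)
  moreover have "(\<lambda>_. 0) \<in> I" using I(2) by (simp add: subspace_def)
  ultimately have "\<phi> (bvec (e, [])) \<noteq> \<phi> (\<lambda>_. 0)"
    using inj_onD[OF \<open>inj_on \<phi> I\<close> _ assms(4)] by blast
  then obtain j x where "\<phi> (bvec (e, [])) j x \<noteq> 0" using zero by (auto simp: fun_eq_iff)
  then obtain z where z: "z \<in> P" and nz: "\<phi> (bvec (e, [])) j (bvec z) \<noteq> 0"
    using cdual_nonzero_on_spanning_path[OF C(1,2) coords[OF assms(4)]] by blast
  have "bvec z \<in> C" using nz coords[OF assms(4)] by (auto simp: cdual_def)
  have prefix: "\<exists>p'. is_path s t p' \<and> bvec p' \<in> C \<and> tgt t q = src p' \<and> z = pconcat q p'"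
    if "is_path s t q" "bvec q \<in> I" "src q = e" for q
    using coord_nonzero_imp_prefix[OF lin C(1) I(1) coords that(1,2)] nz that(3) by blast
  have "src z = e"
    using prefix[of "(e, [])"] assms(4) by (auto simp: is_path_def src_def pconcat_def)
  have "\<forall>r. is_path s t r \<and> bvec r \<in> C \<and> snd r \<noteq> [] \<and> tgt t r = e \<longrightarrow>
      bvec (pconcat r z) \<notin> C"
    using coord_nonzero_imp_no_extension[OF lin C(1) zero assms(4) _ _ _ _ _ \<open>src z = e\<close> nz]
      z C(3) by blast
  then show ?thesis using prefix z C(3) \<open>bvec z \<in> C\<close> by blast
qed

end
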